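(* Let $\mathcal{H}$ be a Hilbert space of dimension $d\ge 3$ with a fixed orthonormal basis, and for an operator $U$ let $U^*$ denote its entrywise complex conjugate in that basis. Then there is no triple $(\epsilon,\mathcal{E},\mathcal{D})$ consisting of a number $\epsilon>0$, a finite-dimensional ancillary Hilbert space $\mathcal{H}_A$, and completely positive trace non-increasing maps $\mathcal{E}:\mathcal{B}(\mathcal{H})\to\mathcal{B}(\mathcal{H}\otimes\mathcal{H}_A)$ and $\mathcal{D}:\mathcal{B}(\mathcal{H}\otimes\mathcal{H}_A)\to\mathcal{B}(\mathcal{H})$ such that for every unitary $U$ on $\mathcal{H}$ and every density operator $\rho$ on $\mathcal{H}$, $$0<\epsilon\le\operatorname{tr}\big[\mathcal{D}\circ(\mathcal{U}_U\otimes\mathrm{id}_{\mathcal{H}_A})\circ\mathcal{E}(\rho)\big]\quad\text{and}\quad \mathcal{D}\circ(\mathcal{U}_U\otimes\mathrm{id}_{\mathcal{H}_A})\circ\mathcal{E}(\rho)\propto U^*\rho\,U^{*\dagger},$$ where $\mathcal{U}_U(X)=UXU^\dagger$ acts on the $\mathcal{H}$ factor. *)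

theory Defs
  imports Complex_Main "Jordan_Normal_Form.Matrix"
begin

text \<open>Operators on C^n are complex n x n matrices (fixed orthonormal = standard basis).\<close>

definition mtrace :: "complex mat \<Rightarrow> complex" where
  "mtrace A = (\<Sum>i<dim_row A. A $$ (i, i))"

definition adj :: "complex mat \<Rightarrow> complex mat" where
  "adj A = transpose_mat (map_mat cnj A)"

definition entry_conj :: "complex mat \<Rightarrow> complex mat" where
  "entry_conj A = map_mat cnj A"

definition unitary_op :: "nat \<Rightarrow> complex mat \<Rightarrow> bool" where
  "unitary_op n U \<longleftrightarrow> U \<in> carrier_mat n n \<and> adj U * U = 1\<^sub>m n"

definition psd :: "nat \<Rightarrow> complex mat \<Rightarrow> bool" where
  "psd n A \<longleftrightarrow> A \<in> carrier_mat n n \<and>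
     (\<forall>v \<in> carrier_vec n. Im (map_vec cnj v \<bullet> (A *\<^sub>v v)) = 0 \<and> Re (map_vec cnj v \<bullet> (A *\<^sub>v v)) \<ge> 0)"

definition density_op :: "nat \<Rightarrow> complex mat \<Rightarrow> bool" where
  "density_op n \<rho> \<longleftrightarrow> psd n \<rho> \<and> mtrace \<rho> = 1"

definition lin_map :: "nat \<Rightarrow> nat \<Rightarrow> (complex mat \<Rightarrow> complex mat) \<Rightarrow> bool" where
  "lin_map n m E \<longleftrightarrow>
     (\<forall>A \<in> carrier_mat n n. E A \<in> carrier_mat m m) \<and>
     (\<forall>A \<in> carrier_mat n n. \<forall>B \<in> carrier_mat n n. E (A + B) = E A + E B) \<and>
     (\<forall>A \<in> carrier_mat n n. \<forall>c. E (c \<cdot>\<^sub>m A) = c \<cdot>\<^sub>m E A)"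

text \<open>id_k \<otimes> E acting on B(C^k \<otimes> C^n), with the C^k index as the outer (block) index.\<close>
definition ampl :: "nat \<Rightarrow> nat \<Rightarrow> nat \<Rightarrow> (complex mat \<Rightarrow> complex mat) \<Rightarrow> complex mat \<Rightarrow> complex mat" where
  "ampl k n m E X = mat (k * m) (k * m) (\<lambda>(r, s).
      E (mat n n (\<lambda>(i, j). X $$ ((r div m) * n + i, (s div m) * n + j))) $$ (r mod m, s mod m))"

definition completely_positive :: "nat \<Rightarrow> nat \<Rightarrow> (complex mat \<Rightarrow> complex mat) \<Rightarrow> bool" where
  "completely_positive n m E \<longleftrightarrow>
     (\<forall>k X. psd (k * n) X \<longrightarrow> psd (k * m) (ampl k n m E X))"

definition trace_nonincreasing :: "nat \<Rightarrow> (complex mat \<Rightarrow> complex mat) \<Rightarrow> bool" where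
  "trace_nonincreasing n E \<longleftrightarrow> (\<forall>\<rho>. psd n \<rho> \<longrightarrow> Re (mtrace (E \<rho>)) \<le> Re (mtrace \<rho>))"

definition cp_tni :: "nat \<Rightarrow> nat \<Rightarrow> (complex mat \<Rightarrow> complex mat) \<Rightarrow> bool" where
  "cp_tni n m E \<longleftrightarrow> lin_map n m E \<and> completely_positive n m E \<and> trace_nonincreasing n E"

text \<open>Kronecker product A \<otimes> B (A p x p, B q x q); index (i,k) of C^p \<otimes> C^q is i*q+k.\<close>
definition kron :: "complex mat \<Rightarrow> complex mat \<Rightarrow> complex mat" where
  "kron A B = mat (dim_row A * dim_row B) (dim_col A * dim_col B)
     (\<lambda>(r, s). A $$ (r div dim_row B, s div dim_col B) * B $$ (r mod dim_row B, s mod dim_col B))"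

definition unitary_chan_on_first :: "nat \<Rightarrow> complex mat \<Rightarrow> complex mat \<Rightarrow> complex mat" where
  "unitary_chan_on_first a U X = kron U (1\<^sub>m a) * X * adj (kron U (1\<^sub>m a))"

end

theory Submission
  imports Defs
begin

text \<open>
  Diagonal unitaries U = diag z and the single input state \<rho> with all entries 1/d already
  suffice.  Cutting E(\<rho>) into its d \<times> d blocks along the basis of \<H> and applying id \<otimes> D
  to the block matrix gives, by complete positivity, a positive semidefinite P on C^d \<otimes> C^d
  with <conj z \<otimes> e_x, P (conj z \<otimes> e_y)> = c(z) conj(z_x) z_y and c(z) \<noteq> 0 for every
  unimodular z.  So conj(z_a) (conj z \<otimes> e_a) - conj(z_b) (conj z \<otimes> e_b) is isotropic for P,
  hence in its kernel.  When d \<ge> 3, averaging such vectors over phases yields 1 \<otimes> e_0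
  (1 the all-ones vector), whose value c(1) under the form is nonzero.
\<close>

section \<open>Sesquilinear forms of positive semidefinite matrices\<close>

definition sesq_form :: "nat \<Rightarrow> complex mat \<Rightarrow> (nat \<Rightarrow> complex) \<Rightarrow> (nat \<Rightarrow> complex) \<Rightarrow> complex" where
  "sesq_form N P v w = (\<Sum>i<N. \<Sum>j<N. cnj (v i) * P $$ (i, j) * w j)"

lemma sesq_form_add_left:
  "sesq_form N P (\<lambda>i. v i + w i) u = sesq_form N P v u + sesq_form N P w u"
  unfolding sesq_form_def by (simp add: distrib_right sum.distrib)

lemma sesq_form_add_right:
  "sesq_form N P u (\<lambda>i. v i + w i) = sesq_form N P u v + sesq_form N P u w"
  unfolding sesq_form_def by (simp add: distrib_left sum.distrib)

lemma sesq_form_diff_left: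
  "sesq_form N P (\<lambda>i. v i - w i) u = sesq_form N P v u - sesq_form N P w u"
  unfolding sesq_form_def by (simp add: left_diff_distrib sum_subtractf)

lemma sesq_form_diff_right:
  "sesq_form N P u (\<lambda>i. v i - w i) = sesq_form N P u v - sesq_form N P u w"
  unfolding sesq_form_def by (simp add: right_diff_distrib sum_subtractf)

lemma sesq_form_scale_left: "sesq_form N P (\<lambda>i. c * v i) u = cnj c * sesq_form N P v u"
  unfolding sesq_form_def by (simp add: sum_distrib_left mult_ac)

lemma sesq_form_scale_right: "sesq_form N P u (\<lambda>i. c * v i) = c * sesq_form N P u v"
  unfolding sesq_form_def by (simp add: sum_distrib_left mult_ac)

lemma sesq_form_sum_right:
  "sesq_form N P u (\<lambda>i. \<Sum>m\<in>S. v m i) = (\<Sum>m\<in>S. sesq_form N P u (v m))"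
  unfolding sesq_form_def by (simp add: sum_distrib_left sum.swap[of _ S])

lemmas sesq_form_linear =
  sesq_form_add_left sesq_form_add_right sesq_form_diff_left sesq_form_diff_right
  sesq_form_scale_left sesq_form_scale_right sesq_form_sum_right

lemma psd_sesq_form:
  assumes "psd N P"
  shows "Im (sesq_form N P v v) = 0" and "Re (sesq_form N P v v) \<ge> 0"
proof -
  have "map_vec cnj (vec N v) \<bullet> (P *\<^sub>v vec N v) = sesq_form N P v v"
    using assms unfolding psd_def sesq_form_def scalar_prod_def mult_mat_vec_def row_def
    by (auto simp: atLeast0LessThan sum_distrib_left mult.assoc intro!: sum.cong)
  with assms show "Im (sesq_form N P v v) = 0" "Re (sesq_form N P v v) \<ge> 0"
    unfolding psd_def by (metis vec_carrier)+
qed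

lemma nonneg_linear_plus_quadratic_imp_zero:
  fixes s q :: real
  assumes "q \<ge> 0" and "\<And>t. t * s + t\<^sup>2 * q \<ge> 0"
  shows "s = 0"
proof -
  define r where "r = 1 / (q + 1)"
  have r: "r > 0" "r * q = 1 - r" unfolding r_def using assms(1) by (simp_all add: field_simps)
  have "(- s * r) * s + (- s * r)\<^sup>2 * q = s\<^sup>2 * r * (r * q - 1)"
    by (simp add: power2_eq_square algebra_simps)
  also have "\<dots> = - (s\<^sup>2 * r\<^sup>2)" by (simp add: r(2) power2_eq_square)
  finally have "s\<^sup>2 * r\<^sup>2 \<le> 0" using assms(2)[of "- s * r"] by simp
  with r(1) show "s = 0" by (simp add: mult_le_0_iff)
qed

lemma psd_isotropic_sesq_form_zero:
  assumes P: "psd N P" and iso: "sesq_form N P v v = 0"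
  shows "sesq_form N P w v = 0"
proof -
  have sym_zero: "sesq_form N P v u + sesq_form N P u v = 0" for u
  proof -
    let ?s = "sesq_form N P v u + sesq_form N P u v"
    have expand: "sesq_form N P (\<lambda>i. v i + of_real t * u i) (\<lambda>i. v i + of_real t * u i)
        = of_real t * ?s + of_real (t\<^sup>2) * sesq_form N P u u" for t
      using iso by (simp add: sesq_form_linear algebra_simps power2_eq_square)
    have "Im ?s = 0"
      using psd_sesq_form(1)[OF P, of "\<lambda>i. v i + of_real 1 * u i"] psd_sesq_form(1)[OF P, of u]
        expand[of 1]
      by simp
    moreover have "Re ?s = 0"
    proof (rule nonneg_linear_plus_quadratic_imp_zero[OF psd_sesq_form(2)[OF P]])
      show "t * Re ?s + t\<^sup>2 * Re (sesq_form N P u u) \<ge> 0" for t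
        using psd_sesq_form(2)[OF P, of "\<lambda>i. v i + of_real t * u i"] by (simp add: expand)
    qed
    ultimately show ?thesis by (simp add: complex_eq_iff)
  qed
  have "\<i> * (sesq_form N P v w - sesq_form N P w v) = 0"
    using sym_zero[of "\<lambda>i. \<i> * w i"] by (simp add: sesq_form_linear algebra_simps)
  with sym_zero[of w] show ?thesis by simp
qed

lemma adj_carrier: "M \<in> carrier_mat m n \<Longrightarrow> adj M \<in> carrier_mat n m"
  unfolding adj_def by auto

lemma adj_dims [simp]: "dim_row (adj M) = dim_col M" "dim_col (adj M) = dim_row M"
  unfolding adj_def by auto

lemma adj_index [simp]: "i < dim_col M \<Longrightarrow> j < dim_row M \<Longrightarrow> adj M $$ (i, j) = cnj (M $$ (j, i))"
  unfolding adj_def by auto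

lemma scalar_prod_cnj_mult_mat_vec:
  assumes M: "M \<in> carrier_mat m n" and v: "v \<in> carrier_vec m" and y: "y \<in> carrier_vec n"
  shows "map_vec cnj v \<bullet> (M *\<^sub>v y) = map_vec cnj (adj M *\<^sub>v v) \<bullet> y"
proof -
  have "map_vec cnj v \<bullet> (M *\<^sub>v y) = (\<Sum>i<m. cnj (v $ i) * (\<Sum>j<n. M $$ (i, j) * y $ j))"
    using M v y unfolding scalar_prod_def mult_mat_vec_def row_def
    by (auto simp: atLeast0LessThan intro!: sum.cong)
  also have "\<dots> = (\<Sum>j<n. (\<Sum>i<m. cnj (v $ i) * M $$ (i, j)) * y $ j)"
    by (simp add: sum_distrib_left sum_distrib_right sum.swap[of _ "{..<m}"] mult_ac)
  also have "\<dots> = map_vec cnj (adj M *\<^sub>v v) \<bullet> y"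
    using M v y unfolding scalar_prod_def mult_mat_vec_def row_def
    by (auto simp: atLeast0LessThan adj_carrier mult_ac intro!: sum.cong)
  finally show ?thesis .
qed

lemma psd_congruence:
  assumes A: "psd n A" and M: "M \<in> carrier_mat m n"
  shows "psd m (M * A * adj M)"
  unfolding psd_def
proof (intro conjI ballI)
  have A_carrier: "A \<in> carrier_mat n n" using A unfolding psd_def by auto
  then show "M * A * adj M \<in> carrier_mat m m" using M adj_carrier[OF M] by auto
  fix v :: "complex vec" assume v: "v \<in> carrier_vec m"
  define u where "u = adj M *\<^sub>v v"
  have u: "u \<in> carrier_vec n" unfolding u_def using adj_carrier[OF M] v by auto
  have "M * A * adj M *\<^sub>v v = M *\<^sub>v (A *\<^sub>v u)"
    using M A_carrier adj_carrier[OF M] v u unfolding u_def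
    by (metis assoc_mult_mat_vec mult_carrier_mat)
  then have "map_vec cnj v \<bullet> (M * A * adj M *\<^sub>v v) = map_vec cnj u \<bullet> (A *\<^sub>v u)"
    using scalar_prod_cnj_mult_mat_vec[OF M v, of "A *\<^sub>v u"] A_carrier u unfolding u_def by auto
  then show "Im (map_vec cnj v \<bullet> (M * A * adj M *\<^sub>v v)) = 0"
    and "0 \<le> Re (map_vec cnj v \<bullet> (M * A * adj M *\<^sub>v v))"
    using A u unfolding psd_def by auto
qed

lemma weighted_selection_congruence:
  fixes g :: "nat \<Rightarrow> complex"
  assumes A: "A \<in> carrier_mat n n" and \<sigma>: "\<And>R. R < m \<Longrightarrow> \<sigma> R < n"
  defines "M \<equiv> mat m n (\<lambda>(R, r). if r = \<sigma> R then g R else 0)"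
  shows "M * A * adj M = mat m m (\<lambda>(R, S). g R * A $$ (\<sigma> R, \<sigma> S) * cnj (g S))"
proof -
  have MA: "M * A = mat m n (\<lambda>(R, s). g R * A $$ (\<sigma> R, s))"
    using A \<sigma> unfolding M_def
    by (auto intro!: eq_matI simp: scalar_prod_def if_distrib[of "\<lambda>x. x * _"] sum.delta'
        cong: if_cong)
  show ?thesis
    unfolding MA using \<sigma> unfolding M_def
    by (auto intro!: eq_matI simp: scalar_prod_def if_distrib[of "\<lambda>x. _ * x"] if_distrib[of cnj]
        sum.delta' cong: if_cong)
qed

lemma lin_map_zero:
  assumes "lin_map n m D"
  shows "D (0\<^sub>m n n) = 0\<^sub>m m m"
proof -
  have "D (0 \<cdot>\<^sub>m 0\<^sub>m n n) = 0 \<cdot>\<^sub>m D (0\<^sub>m n n)"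
    using assms zero_carrier_mat unfolding lin_map_def by blast
  moreover have "D (0\<^sub>m n n) \<in> carrier_mat m m"
    using assms unfolding lin_map_def by simp
  then have "0 \<cdot>\<^sub>m D (0\<^sub>m n n) = 0\<^sub>m m m" by auto
  ultimately show ?thesis by (metis smult_zero_mat)
qed

lemma lin_map_sum_index:
  assumes L: "lin_map n m D" and "finite S" and "\<forall>j\<in>S. A j \<in> carrier_mat n n"
    and x: "x < m" and y: "y < m"
  shows "D (mat n n (\<lambda>rs. \<Sum>j\<in>S. c j * A j $$ rs)) $$ (x, y) = (\<Sum>j\<in>S. c j * D (A j) $$ (x, y))"
  using assms(2,3)
proof (induction S rule: finite_induct)
  case empty
  have "mat n n (\<lambda>_. 0) = (0\<^sub>m n n :: complex mat)" by (auto intro!: eq_matI)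
  then show ?case using lin_map_zero[OF L] x y by simp
next
  case (insert j S)
  let ?M = "mat n n (\<lambda>rs. \<Sum>j\<in>S. c j * A j $$ rs)"
  have Aj: "A j \<in> carrier_mat n n" using insert by auto
  have "mat n n (\<lambda>rs. \<Sum>j\<in>insert j S. c j * A j $$ rs) = c j \<cdot>\<^sub>m A j + ?M"
    using insert Aj by (auto intro!: eq_matI)
  moreover have "D (c j \<cdot>\<^sub>m A j + ?M) = c j \<cdot>\<^sub>m D (A j) + D ?M"
    using L Aj unfolding lin_map_def by simp
  moreover have "D (A j) \<in> carrier_mat m m" "D ?M \<in> carrier_mat m m"
    using L Aj unfolding lin_map_def by auto
  ultimately show ?case using insert x y by simp
qed

lemma cp_tni_psd:
  assumes "cp_tni n m E" and "psd n \<rho>"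
  shows "psd m (E \<rho>)"
proof -
  have "psd (1 * m) (ampl 1 n m E \<rho>)"
    using assms unfolding cp_tni_def completely_positive_def by (metis mult_1)
  moreover have "mat n n (\<lambda>(i, j). \<rho> $$ (i, j)) = \<rho>"
    using assms(2) unfolding psd_def by (auto intro!: eq_matI)
  then have "ampl 1 n m E \<rho> = E \<rho>"
    using assms unfolding ampl_def cp_tni_def lin_map_def psd_def by (auto intro!: eq_matI)
  ultimately show ?thesis by simp
qed

lemma mult_cnj_unimodular: "cmod w = 1 \<Longrightarrow> w * cnj w = 1"
  by (metis complex_norm_square of_real_1 power_one)

lemma adj_mat_diag: "adj (mat_diag n f) = mat_diag n (\<lambda>i. cnj (f i))"
  unfolding mat_diag_def by (auto intro!: eq_matI)

lemma entry_conj_mat_diag: "entry_conj (mat_diag n f) = mat_diag n (\<lambda>i. cnj (f i))"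
  unfolding mat_diag_def entry_conj_def by (auto intro!: eq_matI)

lemma unitary_op_mat_diag:
  assumes "\<forall>k. cmod (z k) = 1"
  shows "unitary_op d (mat_diag d z)"
  using assms unfolding unitary_op_def adj_mat_diag
  by (simp add: mult.commute[of "cnj _"] mult_cnj_unimodular)

lemma mat_diag_congruence:
  assumes "A \<in> carrier_mat n n"
  shows "mat_diag n f * A * adj (mat_diag n f) = mat n n (\<lambda>(i, j). f i * A $$ (i, j) * cnj (f j))"
proof -
  have "mat_diag n f = mat n n (\<lambda>(i, j). if j = id i then f i else 0)"
    unfolding mat_diag_def by (auto intro!: eq_matI)
  then show ?thesis using weighted_selection_congruence[OF assms, where \<sigma> = id and m = n and g = f] by simp
qed

lemma kron_mat_diag_one:
  "kron (mat_diag d z) (1\<^sub>m a) = mat_diag (d * a) (\<lambda>r. z (r div a))"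
proof (rule eq_matI)
  fix r s assume "r < dim_row (mat_diag (d * a) (\<lambda>r. z (r div a)))"
    and "s < dim_col (mat_diag (d * a) (\<lambda>r. z (r div a)))"
  then have rs: "r < d * a" "s < d * a" by (auto simp: mat_diag_def)
  then have "a > 0" by (metis mult_0_right not_less_zero neq0_conv)
  moreover have "r div a < d" "s div a < d" using rs by (auto simp: less_mult_imp_div_less mult.commute)
  moreover have "(r div a = s div a \<and> r mod a = s mod a) \<longleftrightarrow> r = s" by (metis div_mult_mod_eq)
  ultimately show "kron (mat_diag d z) (1\<^sub>m a) $$ (r, s) = mat_diag (d * a) (\<lambda>r. z (r div a)) $$ (r, s)"
    using rs unfolding kron_def mat_diag_def by auto
qed (auto simp: kron_def mat_diag_def)

section \<open>Block matrices\<close>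

lemma block_index_less: "k < d \<Longrightarrow> i < n \<Longrightarrow> k * n + i < d * (n::nat)"
proof -
  assume "k < d" "i < n"
  then have "k * n + i < Suc k * n" by simp
  also have "\<dots> \<le> d * n" using \<open>k < d\<close> by (simp add: Suc_leI mult_le_mono1 del: mult_Suc)
  finally show ?thesis .
qed

lemma block_index_div_mod:
  assumes "i < (n::nat)"
  shows "(k * n + i) div n = k" and "(k * n + i) mod n = i"
  using assms by (simp_all add: div_add1_eq)

lemma sum_mod_eq_reindex:
  fixes g :: "nat \<Rightarrow> complex"
  assumes "x < d"
  shows "(\<Sum>i<d * d. if i mod d = x then g i else 0) = (\<Sum>k<d. g (k * d + x))"
proof -
  have "{i \<in> {..<d * d}. i mod d = x} = (\<lambda>k. k * d + x) ` {..<d}"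
  proof (intro equalityI subsetI)
    fix i assume "i \<in> {i \<in> {..<d * d}. i mod d = x}"
    then have "i = (i div d) * d + x" "i div d < d"
      by (auto simp: less_mult_imp_div_less)
    then show "i \<in> (\<lambda>k. k * d + x) ` {..<d}" by blast
  qed (use assms block_index_less in auto)
  moreover have "inj_on (\<lambda>k. k * d + x) {..<d}" by (auto simp: inj_on_def)
  ultimately show ?thesis by (simp add: sum.inter_filter[symmetric] sum.reindex)
qed

text \<open>
  block_restrict a Z k l keeps the (k, l) block of Z with respect to the first factor of
  C^d \<otimes> C^a (row r of Z belongs to block r div a, as in kron), and
  block_matrix d a Z is the sum over k, l < d of |k\<rangle>\<langle>l| \<otimes> block_restrict a Z k l.
\<close>

definition block_restrict :: "nat \<Rightarrow> complex mat \<Rightarrow> nat \<Rightarrow> nat \<Rightarrow> complex mat" where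
  "block_restrict a Z k l = mat (dim_row Z) (dim_col Z)
     (\<lambda>(r, s). if r div a = k \<and> s div a = l then Z $$ (r, s) else 0)"

definition block_matrix :: "nat \<Rightarrow> nat \<Rightarrow> complex mat \<Rightarrow> complex mat" where
  "block_matrix d a Z = mat (d * (d * a)) (d * (d * a))
     (\<lambda>(R, S). block_restrict a Z (R div (d * a)) (S div (d * a)) $$ (R mod (d * a), S mod (d * a)))"

lemma psd_block_matrix:
  assumes "psd (d * a) Z"
  shows "psd (d * (d * a)) (block_matrix d a Z)"
proof -
  let ?n = "d * a"
  let ?g = "\<lambda>R. if (R mod ?n) div a = R div ?n then 1 else 0 :: complex"
  let ?M = "mat (d * ?n) ?n (\<lambda>(R, r). if r = R mod ?n then ?g R else 0)"
  have Z: "Z \<in> carrier_mat ?n ?n" using assms unfolding psd_def by simp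
  have mod_less: "R mod ?n < ?n" if "R < d * ?n" for R using that by (cases "?n = 0") auto
  have "?M * Z * adj ?M = mat (d * ?n) (d * ?n) (\<lambda>(R, S). ?g R * Z $$ (R mod ?n, S mod ?n) * cnj (?g S))"
    by (rule weighted_selection_congruence[OF Z mod_less])
  also have "\<dots> = block_matrix d a Z"
    using Z mod_less by (auto intro!: eq_matI simp: block_matrix_def block_restrict_def)
  finally show ?thesis using psd_congruence[OF assms, of ?M] by simp
qed

lemma ampl_block_matrix_index:
  assumes Z: "Z \<in> carrier_mat (d * a) (d * a)" and r: "r < d * d" and s: "s < d * d"
  shows "ampl d (d * a) d D (block_matrix d a Z) $$ (r, s)
    = D (block_restrict a Z (r div d) (s div d)) $$ (r mod d, s mod d)"
proof -
  let ?n = "d * a"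
  have k: "r div d < d" "s div d < d" using r s by (auto simp: less_mult_imp_div_less)
  have "mat ?n ?n (\<lambda>(i, j). block_matrix d a Z $$ ((r div d) * ?n + i, (s div d) * ?n + j))
      = block_restrict a Z (r div d) (s div d)"
    using Z block_index_less[OF k(1)] block_index_less[OF k(2)]
    by (auto intro!: eq_matI simp: block_matrix_def block_restrict_def block_index_div_mod)
  then show ?thesis using r s unfolding ampl_def by simp
qed

lemma unitary_chan_on_first_mat_diag:
  assumes Z: "Z \<in> carrier_mat (d * a) (d * a)"
  shows "unitary_chan_on_first a (mat_diag d z) Z = mat (d * a) (d * a) (\<lambda>rs.
    \<Sum>p\<in>{..<d} \<times> {..<d}. z (fst p) * cnj (z (snd p)) * block_restrict a Z (fst p) (snd p) $$ rs)"
  unfolding unitary_chan_on_first_def kron_mat_diag_one mat_diag_congruence[OF Z]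
proof (rule eq_matI)
  fix r s assume "r < dim_row (mat (d * a) (d * a) (\<lambda>rs.
    \<Sum>p\<in>{..<d} \<times> {..<d}. z (fst p) * cnj (z (snd p)) * block_restrict a Z (fst p) (snd p) $$ rs))"
    and "s < dim_col (mat (d * a) (d * a) (\<lambda>rs.
    \<Sum>p\<in>{..<d} \<times> {..<d}. z (fst p) * cnj (z (snd p)) * block_restrict a Z (fst p) (snd p) $$ rs))"
  then have rs: "r < d * a" "s < d * a" by auto
  then have blk: "(r div a, s div a) \<in> {..<d} \<times> {..<d}"
    by (auto simp: less_mult_imp_div_less mult.commute)
  have "(\<Sum>p\<in>{..<d} \<times> {..<d}. z (fst p) * cnj (z (snd p)) * block_restrict a Z (fst p) (snd p) $$ (r, s))
      = (\<Sum>p\<in>{..<d} \<times> {..<d}. if p = (r div a, s div a) then z (fst p) * cnj (z (snd p)) * Z $$ (r, s) else 0)"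
    using rs Z unfolding block_restrict_def by (intro sum.cong) auto
  also have "\<dots> = z (r div a) * Z $$ (r, s) * cnj (z (s div a))"
    using blk by (simp add: sum.delta' mult_ac)
  finally show "mat (d * a) (d * a) (\<lambda>(i, j). z (i div a) * Z $$ (i, j) * cnj (z (j div a))) $$ (r, s) =
    mat (d * a) (d * a) (\<lambda>rs. \<Sum>p\<in>{..<d} \<times> {..<d}.
      z (fst p) * cnj (z (snd p)) * block_restrict a Z (fst p) (snd p) $$ rs) $$ (r, s)"
    using rs by simp
qed auto

text \<open>The vector conj z \<otimes> e_x of C^d \<otimes> C^d; index k * d + x, as in ampl.\<close>

definition conj_tensor_basis :: "nat \<Rightarrow> (nat \<Rightarrow> complex) \<Rightarrow> nat \<Rightarrow> nat \<Rightarrow> complex" where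
  "conj_tensor_basis d z x i = (if i mod d = x then cnj (z (i div d)) else 0)"

lemma sesq_form_ampl_block_matrix:
  assumes D: "lin_map (d * a) d D" and Z: "Z \<in> carrier_mat (d * a) (d * a)"
    and x: "x < d" and y: "y < d"
  shows "sesq_form (d * d) (ampl d (d * a) d D (block_matrix d a Z))
      (conj_tensor_basis d z x) (conj_tensor_basis d z y)
    = D (unitary_chan_on_first a (mat_diag d z) Z) $$ (x, y)"
proof -
  let ?P = "ampl d (d * a) d D (block_matrix d a Z)"
  let ?B = "block_restrict a Z"
  have "sesq_form (d * d) ?P (conj_tensor_basis d z x) (conj_tensor_basis d z y)
      = (\<Sum>i<d * d. if i mod d = x then (\<Sum>j<d * d. if j mod d = y
          then z (i div d) * ?P $$ (i, j) * cnj (z (j div d)) else 0) else 0)"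
    unfolding sesq_form_def conj_tensor_basis_def by (intro sum.cong) (auto intro!: sum.cong)
  also have "\<dots> = (\<Sum>k<d. \<Sum>l<d. z k * ?P $$ (k * d + x, l * d + y) * cnj (z l))"
    using x y by (simp add: sum_mod_eq_reindex)
  also have "\<dots> = (\<Sum>k<d. \<Sum>l<d. z k * cnj (z l) * D (?B k l) $$ (x, y))"
  proof -
    have "z k * ?P $$ (k * d + x, l * d + y) * cnj (z l) = z k * cnj (z l) * D (?B k l) $$ (x, y)"
      if "k < d" "l < d" for k l
      using ampl_block_matrix_index[OF Z block_index_less[OF that(1) x] block_index_less[OF that(2) y]]
        x y by simp
    then show ?thesis by (intro sum.cong refl) auto
  qed
  also have "\<dots> = (\<Sum>p\<in>{..<d} \<times> {..<d}. z (fst p) * cnj (z (snd p)) * D (?B (fst p) (snd p)) $$ (x, y))"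
    by (simp add: sum.cartesian_product case_prod_beta)
  also have "\<dots> = D (unitary_chan_on_first a (mat_diag d z) Z) $$ (x, y)"
    unfolding unitary_chan_on_first_mat_diag[OF Z]
    by (rule lin_map_sum_index[OF D _ _ x y, symmetric]) (use Z in \<open>auto simp: block_restrict_def\<close>)
  finally show ?thesis .
qed

section \<open>The form produced by a conjugation protocol\<close>

lemma density_op_uniform:
  assumes "d > 0"
  shows "density_op d (mat d d (\<lambda>_. 1 / of_nat d))"
proof -
  let ?\<rho> = "mat d d (\<lambda>_. 1 / of_nat d) :: complex mat"
  have "map_vec cnj v \<bullet> (?\<rho> *\<^sub>v v) = of_real ((cmod (\<Sum>j<d. v $ j))\<^sup>2 / real d)"
    if "v \<in> carrier_vec d" for v
  proof -
    have "map_vec cnj v \<bullet> (?\<rho> *\<^sub>v v) = (\<Sum>i<d. cnj (v $ i) * (\<Sum>j<d. 1 / of_nat d * v $ j))"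
      using that unfolding scalar_prod_def mult_mat_vec_def row_def
      by (auto simp: atLeast0LessThan intro!: sum.cong)
    also have "\<dots> = cnj (\<Sum>j<d. v $ j) * (\<Sum>j<d. v $ j) / of_nat d"
      by (simp add: sum_distrib_left[symmetric] sum_distrib_right[symmetric] cnj_sum
          sum_divide_distrib[symmetric])
    finally show ?thesis using complex_norm_square[of "\<Sum>j<d. v $ j"] by (simp add: mult.commute)
  qed
  then have "psd d ?\<rho>" unfolding psd_def by simp
  moreover have "mtrace ?\<rho> = 1" unfolding mtrace_def using assms by simp
  ultimately show ?thesis unfolding density_op_def by simp
qed

lemma mat_diag_conj_uniform:
  "entry_conj (mat_diag d z) * mat d d (\<lambda>_. 1 / of_nat d) * adj (entry_conj (mat_diag d z))
    = mat d d (\<lambda>(i, j). cnj (z i) * z j / of_nat d)"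
  unfolding entry_conj_mat_diag by (subst mat_diag_congruence) (auto intro!: eq_matI)

definition conjugating_form :: "nat \<Rightarrow> nat \<Rightarrow> complex mat \<Rightarrow> bool" where
  "conjugating_form N d P \<longleftrightarrow> psd N P \<and> (\<forall>z. (\<forall>k. cmod (z k) = 1) \<longrightarrow> (\<exists>c. c \<noteq> 0 \<and>
     (\<forall>x<d. \<forall>y<d. sesq_form N P (conj_tensor_basis d z x) (conj_tensor_basis d z y)
        = c * cnj (z x) * z y)))"

lemma conjugating_form_of_protocol:
  fixes \<epsilon> :: real
  assumes "d > 0" and "\<epsilon> > 0" and E: "cp_tni d (d * a) E" and D: "cp_tni (d * a) d D"
    and protocol: "\<forall>U \<rho>. unitary_op d U \<longrightarrow> density_op d \<rho> \<longrightarrow>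
      \<epsilon> \<le> Re (mtrace (D (unitary_chan_on_first a U (E \<rho>)))) \<and>
      (\<exists>c. D (unitary_chan_on_first a U (E \<rho>)) = c \<cdot>\<^sub>m (entry_conj U * \<rho> * adj (entry_conj U)))"
  shows "conjugating_form (d * d) d (ampl d (d * a) d D (block_matrix d a (E (mat d d (\<lambda>_. 1 / of_nat d)))))"
proof -
  let ?\<rho> = "mat d d (\<lambda>_. 1 / of_nat d) :: complex mat"
  have \<rho>: "density_op d ?\<rho>" by (rule density_op_uniform[OF \<open>d > 0\<close>])
  have Z: "psd (d * a) (E ?\<rho>)" using cp_tni_psd[OF E] \<rho> unfolding density_op_def by simp
  then have Z_carrier: "E ?\<rho> \<in> carrier_mat (d * a) (d * a)" unfolding psd_def by simp
  have D_lin: "lin_map (d * a) d D" using D unfolding cp_tni_def by simp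
  have "psd (d * d) (ampl d (d * a) d D (block_matrix d a (E ?\<rho>)))"
    using D psd_block_matrix[OF Z] unfolding cp_tni_def completely_positive_def by simp
  moreover have "\<exists>c. c \<noteq> 0 \<and> (\<forall>x<d. \<forall>y<d.
      sesq_form (d * d) (ampl d (d * a) d D (block_matrix d a (E ?\<rho>)))
        (conj_tensor_basis d z x) (conj_tensor_basis d z y) = c * cnj (z x) * z y)"
    if z: "\<forall>k. cmod (z k) = 1" for z
  proof -
    let ?out = "D (unitary_chan_on_first a (mat_diag d z) (E ?\<rho>))"
    obtain c where eps: "\<epsilon> \<le> Re (mtrace ?out)"
      and out: "?out = c \<cdot>\<^sub>m mat d d (\<lambda>(i, j). cnj (z i) * z j / of_nat d)"
      using protocol[rule_format, OF unitary_op_mat_diag[OF z] \<rho>]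
      unfolding mat_diag_conj_uniform by blast
    have "mtrace ?out = c"
      unfolding mtrace_def out using z \<open>d > 0\<close> by (simp add: mult.assoc mult.commute[of "cnj _"] mult_cnj_unimodular)
    with eps \<open>\<epsilon> > 0\<close> \<open>d > 0\<close> have "c / of_nat d \<noteq> 0" by auto
    moreover have "sesq_form (d * d) (ampl d (d * a) d D (block_matrix d a (E ?\<rho>)))
        (conj_tensor_basis d z x) (conj_tensor_basis d z y) = c / of_nat d * cnj (z x) * z y"
      if "x < d" "y < d" for x y
      unfolding sesq_form_ampl_block_matrix[OF D_lin Z_carrier that] out using that by simp
    ultimately show ?thesis by blast
  qed
  ultimately show ?thesis unfolding conjugating_form_def by blast
qed

section \<open>Isotropic vectors and phase averaging\<close>

definition phase_on :: "nat set \<Rightarrow> complex \<Rightarrow> nat \<Rightarrow> complex" where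
  "phase_on A t k = (if k \<in> A then t else 1)"

definition phase_difference :: "nat \<Rightarrow> (nat \<Rightarrow> complex) \<Rightarrow> nat \<Rightarrow> nat \<Rightarrow> nat \<Rightarrow> complex" where
  "phase_difference d z a b i
    = cnj (z a) * conj_tensor_basis d z a i - cnj (z b) * conj_tensor_basis d z b i"

lemma conjugating_form_phase_difference_null:
  assumes form: "conjugating_form N d P" and z: "\<forall>k. cmod (z k) = 1" and "a < d" "b < d"
  shows "sesq_form N P w (phase_difference d z a b) = 0"
proof -
  obtain c where c: "\<forall>x<d. \<forall>y<d.
      sesq_form N P (conj_tensor_basis d z x) (conj_tensor_basis d z y) = c * cnj (z x) * z y"
    using form z unfolding conjugating_form_def by blast
  let ?a = "z a * cnj (z a)" and ?b = "z b * cnj (z b)"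
  have "sesq_form N P (phase_difference d z a b) (phase_difference d z a b)
      = c * (?a * ?a - ?a * ?b - ?a * ?b + ?b * ?b)"
    using c \<open>a < d\<close> \<open>b < d\<close> unfolding phase_difference_def
    by (simp add: sesq_form_linear algebra_simps)
  also have "\<dots> = 0" using z by (simp add: mult_cnj_unimodular)
  finally show ?thesis using form psd_isotropic_sesq_form_zero unfolding conjugating_form_def by blast
qed

text \<open>
  As functions of t = \<i>^m the phase differences below are Laurent polynomials, and averaging
  t^j times them over m < 4 extracts their coefficient of t^-j.  The index 2 needs d \<ge> 3.
\<close>

lemma ones_tensor_basis_phase_average:
  assumes "d \<ge> 3"
  shows "conj_tensor_basis d (\<lambda>_. 1) 0 i = 1 / 4 * (\<Sum>m<4.
      (\<i> ^ m)\<^sup>2 * phase_difference d (phase_on {0} (\<i> ^ m)) 0 1 i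
    + \<i> ^ m * phase_difference d (phase_on {0} (\<i> ^ m)) 0 1 i
    + (\<i> ^ m)\<^sup>2 * phase_difference d (phase_on {0, 1} (\<i> ^ m)) 1 2 i
    - (\<i> ^ m)\<^sup>2 * phase_difference d (phase_on {1} (\<i> ^ m)) 1 0 i)"
proof -
  have "i mod d = 0 \<or> i mod d = 1 \<or> i mod d = 2 \<or> i mod d > 2"
    and "i div d = 0 \<or> i div d = 1 \<or> i div d = 2 \<or> i div d > 2" by auto
  then show ?thesis
    using assms unfolding conj_tensor_basis_def phase_difference_def phase_on_def
    by (auto simp: numeral_eq_Suc power2_eq_square)
qed

lemma no_conjugating_form:
  assumes "d \<ge> 3"
  shows "\<not> conjugating_form N d P"
proof
  assume form: "conjugating_form N d P"
  have null: "sesq_form N P w (phase_difference d (phase_on A (\<i> ^ m)) a b) = 0"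
    if "a < d" "b < d" for w A m a b
    using conjugating_form_phase_difference_null[OF form _ that]
    by (simp add: phase_on_def norm_power)
  let ?v = "conj_tensor_basis d (\<lambda>_. 1) 0"
  have d: "0 < d" "1 < d" "2 < d" using assms by simp_all
  have "sesq_form N P ?v ?v = 0"
    by (subst (2) ext[OF ones_tensor_basis_phase_average[OF assms]], simp only: sesq_form_linear,
        simp only: null[OF d(1,2)] null[OF d(2,3)] null[OF d(2,1)]
          mult_zero_right add_0_right diff_zero sum.neutral_const)
  moreover obtain c where "c \<noteq> 0" and "sesq_form N P ?v ?v = c"
    using form[unfolded conjugating_form_def, THEN conjunct2, rule_format, of "\<lambda>_. 1"] d(1)
    by auto
  ultimately show False by simp
qed

theorem theorem2:
  fixes d :: nat
  assumes "d \<ge> 3"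
  shows "\<not> (\<exists>(\<epsilon>::real) (a::nat) E D.
            \<epsilon> > 0 \<and> cp_tni d (d * a) E \<and> cp_tni (d * a) d D \<and>
            (\<forall>U \<rho>. unitary_op d U \<longrightarrow> density_op d \<rho> \<longrightarrow>
               \<epsilon> \<le> Re (mtrace (D (unitary_chan_on_first a U (E \<rho>)))) \<and>
               (\<exists>c::complex. D (unitary_chan_on_first a U (E \<rho>))
                   = c \<cdot>\<^sub>m (entry_conj U * \<rho> * adj (entry_conj U)))))"
proof (intro notI, elim exE conjE, goal_cases)
  case (1 \<epsilon> a E D)
  then have "conjugating_form (d * d) d
      (ampl d (d * a) d D (block_matrix d a (E (mat d d (\<lambda>_. 1 / of_nat d)))))"
    using assms by (intro conjugating_form_of_protocol) auto
  with no_conjugating_form[OF assms] show False by blast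
qed

end
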